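(* In a strongly causal, digitalizable OPT, for every $\rho\in\mathsf{St}_1(\mathrm{A})$ one has $I(\rho)\ge I^C(\rho)$.
   Context: Framework (operational probabilistic theory, OPT): each system $\mathrm{A}$ has states $\mathsf{St}(\mathrm{A})$ (normalized ones $\mathsf{St}_1(\mathrm{A})$), effects $\mathsf{Eff}(\mathrm{A})$, transformations $\mathsf{Tr}(\mathrm{A}\to\mathrm{B})$ (channels $\mathsf{Tr}_1$), sequential ($\circ$) and parallel ($\boxtimes$) composition, pairing $(a|\rho)$. Strong causality: for every test $\{\mathcal A_i\}$ and tests $\{\mathcal B^i_j\}_j$, $\{\mathcal B^i_j\circ\mathcal A_i\}$ is a test; unique deterministic effect $e_{\mathrm{A}}$. Operational norm $\|\delta\|_{\rm op}:=\sup_{a\in\mathsf{Eff}(\mathrm{A})}((2a-e_{\mathrm{A}})|\delta)$. A refinement of a state $\Omega$ is a collection of states contained in a preparation test summing to $\Omega$. A dilation of $\rho\in\mathsf{St}(\mathrm{A})$ is $\Psi\in\mathsf{St}(\mathrm{A}\mathrm{C})$ with $(\mathcal I_{\mathrm{A}}\boxtimes e_{\mathrm{C}})\Psi=\rho$. Digitalizability: there is an obit system $\mathrm{O}$ such that every system $\mathrm{X}$ can be perfectly encoded via channels into $\mathrm{O}^{\boxtimes k}$ for some finite $k$. Information content: compression scheme $\mathcal E\in\mathsf{Tr}_1(\mathrm{A}^{\boxtimes N}\to\mathrm{O}^{\boxtimes M})$, $\mathcal D\in\mathsf{Tr}_1(\mathrm{O}^{\boxtimes M}\to\mathrm{A}^{\boxtimes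 N})$; $E_{N,M,\varepsilon}(\rho)$ is the set of schemes with $\sup_{\mathrm{C},\{\Psi_i\}}\sum_i\|((\mathcal D\circ\mathcal E)\boxtimes\mathcal I_{\mathrm{C}})\Psi_i-\Psi_i\|_{\rm op}<\varepsilon$, over all systems $\mathrm{C}$ and refinements $\{\Psi_i\}\subseteq\mathsf{St}(\mathrm{A}^{\boxtimes N}\mathrm{C})$ of dilations of $\rho^{\boxtimes N}$; $I(\rho):=\lim_{\varepsilon\to0}\limsup_{N\to\infty}\min\{M:E_{N,M,\varepsilon}(\rho)\ne\emptyset\}/N$. Classical version $I^C$: for a compression scheme $(\mathcal E,\mathcal D)$, a system $\mathrm{C}$, a preparation test $\{\Psi_i\}_{i=1}^n$ of $\mathrm{A}^{\boxtimes N}\mathrm{C}$ with $\sum_i\Psi_i$ a dilation of $\rho^{\boxtimes N}$, and an observation test $\{a_j\}_{j=1}^m$ of $\mathrm{A}^{\boxtimes N}\mathrm{C}$, set $p_{ij}:=(a_j|\Psi_i)$, $q_{ij}:=(a_j|((\mathcal D\circ\mathcal E)\boxtimes\mathcal I_{\mathrm{C}})\Psi_i)$, and let $I(X:Y)=\sum_{ij}p_{ij}\log_2\frac{p_{ij}}{p^X_ip^Y_j}$, $I(X:\tilde Y)=\sum_{ij}q_{ij}\log_2\frac{q_{ij}}{q^X_iq^{\tilde Y}_j}$ be the Shannon mutual informations (marginals $p^X,p^Y,q^X=p^X,q^{\tilde Y}$). $E^C_{N,M,\delta}(\rho)$ is the set of schemes with $\sup_{\mathrm{C},\{\Psi_i\},\{a_j\}}L^{-1}|I(X:Y)-I(X:\tilde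 Y)|<\delta$, where $L=\log_2(mn-1)$ (cases with $m=1$ or $n=1$ give zero difference and are disregarded). $R^C_{\delta,N}(\rho):=\min\{M:E^C_{N,M,\delta}(\rho)\ne\emptyset\}/N$, $R^C_\delta(\rho):=\limsup_{N\to\infty}R^C_{\delta,N}(\rho)$, $I^C(\rho):=\lim_{\delta\to0}R^C_\delta(\rho)$. *)

theory Defs
  imports Complex_Main "HOL-Library.Extended_Real"
begin

text \<open>Systems have type 's, events (transformations; states are events from the trivial
system, effects are events into the trivial system) have type 't.
seqc g f is the sequential composition g o f, parc is parallel composition,
idt A the identity on A, prob maps closed circuits (events I to I) to probabilities.\<close>

record ('s, 't) opt =
  unitS :: 's
  tensS :: "'s \<Rightarrow> 's \<Rightarrow> 's"
  tests :: "'s \<Rightarrow> 's \<Rightarrow> 't list set"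
  seqc  :: "'t \<Rightarrow> 't \<Rightarrow> 't"
  parc  :: "'t \<Rightarrow> 't \<Rightarrow> 't"
  idt   :: "'s \<Rightarrow> 't"
  prob  :: "'t \<Rightarrow> real"

definition Tr :: "('s,'t) opt \<Rightarrow> 's \<Rightarrow> 's \<Rightarrow> 't set" where
  "Tr T A B = {t. \<exists>U\<in>tests T A B. t \<in> set U}"

definition Tr1 :: "('s,'t) opt \<Rightarrow> 's \<Rightarrow> 's \<Rightarrow> 't set" where
  "Tr1 T A B = {t. [t] \<in> tests T A B}"

definition St :: "('s,'t) opt \<Rightarrow> 's \<Rightarrow> 't set" where
  "St T A = Tr T (unitS T) A"

definition St1 :: "('s,'t) opt \<Rightarrow> 's \<Rightarrow> 't set" where
  "St1 T A = Tr1 T (unitS T) A"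

definition Eff :: "('s,'t) opt \<Rightarrow> 's \<Rightarrow> 't set" where
  "Eff T A = Tr T A (unitS T)"

text \<open>Deterministic effect (unique under causality).\<close>
definition detE :: "('s,'t) opt \<Rightarrow> 's \<Rightarrow> 't" where
  "detE T A = (THE e. [e] \<in> tests T A (unitS T))"

definition pair :: "('s,'t) opt \<Rightarrow> 't \<Rightarrow> 't \<Rightarrow> real" where
  "pair T a x = prob T (seqc T a x)"

definition circ :: "('s,'t) opt \<Rightarrow> 's \<Rightarrow> 't \<Rightarrow> 't \<Rightarrow> 't \<Rightarrow> real" where
  "circ T C b f psi = prob T (seqc T b (seqc T (parc T f (idt T C)) psi))"

definition is_opt :: "('s,'t) opt \<Rightarrow> bool" where
  "is_opt T \<longleftrightarrow>
     (\<forall>A. tensS T (unitS T) A = A \<and> tensS T A (unitS T) = A) \<and>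
     (\<forall>A B C. tensS T (tensS T A B) C = tensS T A (tensS T B C)) \<and>
     (\<forall>A. [idt T A] \<in> tests T A A) \<and>
     (\<forall>A B C U V. U \<in> tests T A B \<longrightarrow> V \<in> tests T B C \<longrightarrow>
        [seqc T v u. u \<leftarrow> U, v \<leftarrow> V] \<in> tests T A C) \<and>
     (\<forall>A B C D U V. U \<in> tests T A B \<longrightarrow> V \<in> tests T C D \<longrightarrow>
        [parc T u v. u \<leftarrow> U, v \<leftarrow> V] \<in> tests T (tensS T A C) (tensS T B D)) \<and>
     (\<forall>A B f. f \<in> Tr T A B \<longrightarrow> seqc T f (idt T A) = f \<and> seqc T (idt T B) f = f) \<and>
     (\<forall>A B C D f g h. f \<in> Tr T A B \<longrightarrow> g \<in> Tr T B C \<longrightarrow> h \<in> Tr T C D \<longrightarrow>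
        seqc T h (seqc T g f) = seqc T (seqc T h g) f) \<and>
     (\<forall>A B f. f \<in> Tr T A B \<longrightarrow>
        parc T f (idt T (unitS T)) = f \<and> parc T (idt T (unitS T)) f = f) \<and>
     (\<forall>A B C D E F f g h. f \<in> Tr T A B \<longrightarrow> g \<in> Tr T C D \<longrightarrow> h \<in> Tr T E F \<longrightarrow>
        parc T (parc T f g) h = parc T f (parc T g h)) \<and>
     (\<forall>A B C D E F f g f' g'. f \<in> Tr T A B \<longrightarrow> g \<in> Tr T B C \<longrightarrow>
        f' \<in> Tr T D E \<longrightarrow> g' \<in> Tr T E F \<longrightarrow>
        parc T (seqc T g f) (seqc T g' f') = seqc T (parc T g g') (parc T f f')) \<and>
     (\<forall>A B. parc T (idt T A) (idt T B) = idt T (tensS T A B)) \<and>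
     (\<forall>s t. s \<in> Tr T (unitS T) (unitS T) \<longrightarrow> t \<in> Tr T (unitS T) (unitS T) \<longrightarrow>
        prob T (seqc T s t) = prob T s * prob T t \<and>
        prob T (parc T s t) = prob T s * prob T t) \<and>
     (\<forall>U. U \<in> tests T (unitS T) (unitS T) \<longrightarrow>
        (\<forall>t\<in>set U. 0 \<le> prob T t) \<and> sum_list (map (prob T) U) = 1) \<and>
     \<comment> \<open>operational equivalence: events are identified when they agree in all circuits\<close>
     (\<forall>A B f g. f \<in> Tr T A B \<longrightarrow> g \<in> Tr T A B \<longrightarrow>
        (\<forall>C psi b. psi \<in> St T (tensS T A C) \<longrightarrow> b \<in> Eff T (tensS T B C) \<longrightarrow>
           circ T C b f psi = circ T C b g psi) \<longrightarrow> f = g) \<and>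
     \<comment> \<open>coarse-graining of tests\<close>
     (\<forall>A B U k c. U \<in> tests T A B \<longrightarrow> (\<forall>i<length U. c i < k) \<longrightarrow>
        (\<exists>V\<in>tests T A B. length V = k \<and>
          (\<forall>l<k. \<forall>C psi b. psi \<in> St T (tensS T A C) \<longrightarrow> b \<in> Eff T (tensS T B C) \<longrightarrow>
             circ T C b (V ! l) psi = (\<Sum>i\<in>{i. i < length U \<and> c i = l}. circ T C b (U ! i) psi))))"

definition strongly_causal :: "('s,'t) opt \<Rightarrow> bool" where
  "strongly_causal T \<longleftrightarrow>
     (\<forall>A B C U Vs. U \<in> tests T A B \<longrightarrow> length Vs = length U \<longrightarrow>
        (\<forall>i<length U. Vs ! i \<in> tests T B C) \<longrightarrow>
        concat (map (\<lambda>(u, V). map (\<lambda>v. seqc T v u) V) (zip U Vs)) \<in> tests T A C) \<and>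
     (\<forall>A. \<exists>!e. [e] \<in> tests T A (unitS T))"

fun spow :: "('s,'t) opt \<Rightarrow> 's \<Rightarrow> nat \<Rightarrow> 's" where
  "spow T A 0 = unitS T"
| "spow T A (Suc n) = tensS T A (spow T A n)"

fun tpow :: "('s,'t) opt \<Rightarrow> 't \<Rightarrow> nat \<Rightarrow> 't" where
  "tpow T f 0 = idt T (unitS T)"
| "tpow T f (Suc n) = parc T f (tpow T f n)"

definition digitalizable :: "('s,'t) opt \<Rightarrow> 's \<Rightarrow> bool" where
  "digitalizable T Ob \<longleftrightarrow>
     (\<forall>X. \<exists>k E D. E \<in> Tr1 T X (spow T Ob k) \<and> D \<in> Tr1 T (spow T Ob k) X \<and>
        seqc T D E = idt T X)"

definition opnorm_diff :: "('s,'t) opt \<Rightarrow> 's \<Rightarrow> 't \<Rightarrow> 't \<Rightarrow> real" where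
  "opnorm_diff T A x y =
     Sup ((\<lambda>a. (2 * pair T a x - pair T (detE T A) x) - (2 * pair T a y - pair T (detE T A) y))
          ` Eff T A)"

definition is_dilation :: "('s,'t) opt \<Rightarrow> 's \<Rightarrow> 's \<Rightarrow> 't \<Rightarrow> 't \<Rightarrow> bool" where
  "is_dilation T A C Psi rho \<longleftrightarrow>
     Psi \<in> St T (tensS T A C) \<and> rho \<in> St T A \<and>
     seqc T (parc T (idt T A) (detE T C)) Psi = rho"

definition sums_to :: "('s,'t) opt \<Rightarrow> 's \<Rightarrow> 't list \<Rightarrow> 't \<Rightarrow> bool" where
  "sums_to T S Ps Om \<longleftrightarrow> (\<forall>a\<in>Eff T S. pair T a Om = (\<Sum>x\<leftarrow>Ps. pair T a x))"

definition is_refinement :: "('s,'t) opt \<Rightarrow> 's \<Rightarrow> 't list \<Rightarrow> 't \<Rightarrow> bool" where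
  "is_refinement T S Ps Om \<longleftrightarrow>
     (\<exists>U\<in>tests T (unitS T) S. \<exists>idx. distinct idx \<and> set idx \<subseteq> {..<length U} \<and>
        Ps = map (\<lambda>i. U ! i) idx) \<and> sums_to T S Ps Om"

definition schemes :: "('s,'t) opt \<Rightarrow> 's \<Rightarrow> 's \<Rightarrow> nat \<Rightarrow> nat \<Rightarrow> ('t \<times> 't) set" where
  "schemes T Ob A N M = {(E, D). E \<in> Tr1 T (spow T A N) (spow T Ob M) \<and>
                                 D \<in> Tr1 T (spow T Ob M) (spow T A N)}"

definition refs_of_dil :: "('s,'t) opt \<Rightarrow> 's \<Rightarrow> 't \<Rightarrow> nat \<Rightarrow> ('s \<times> 't list) set" where
  "refs_of_dil T A rho N = {(C, Ps). \<exists>Om. is_dilation T (spow T A N) C Om (tpow T rho N) \<and>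
                               is_refinement T (tensS T (spow T A N) C) Ps Om}"

definition Eset :: "('s,'t) opt \<Rightarrow> 's \<Rightarrow> 's \<Rightarrow> 't \<Rightarrow> nat \<Rightarrow> nat \<Rightarrow> real \<Rightarrow> ('t \<times> 't) set" where
  "Eset T Ob A rho N M eps = {(E, D). (E, D) \<in> schemes T Ob A N M \<and>
     (SUP p\<in>refs_of_dil T A rho N.
        ereal (\<Sum>Psi\<leftarrow>snd p. opnorm_diff T (tensS T (spow T A N) (fst p))
                 (seqc T (parc T (seqc T D E) (idt T (fst p))) Psi) Psi)) < ereal eps}"

definition info :: "('s,'t) opt \<Rightarrow> 's \<Rightarrow> 's \<Rightarrow> 't \<Rightarrow> ereal" where
  "info T Ob A rho = Lim (at_right 0)
     (\<lambda>eps. limsup (\<lambda>N. ereal (real (Inf {M. Eset T Ob A rho N M eps \<noteq> {}}) / real N)))"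

definition mutual_info :: "nat \<Rightarrow> nat \<Rightarrow> (nat \<Rightarrow> nat \<Rightarrow> real) \<Rightarrow> real" where
  "mutual_info n m p = (\<Sum>i<n. \<Sum>j<m.
     (if p i j = 0 then 0
      else p i j * log 2 (p i j / ((\<Sum>j'<m. p i j') * (\<Sum>i'<n. p i' j)))))"

definition classical_setups :: "('s,'t) opt \<Rightarrow> 's \<Rightarrow> 't \<Rightarrow> nat \<Rightarrow> ('s \<times> 't list \<times> 't list) set" where
  "classical_setups T A rho N = {(C, Ps, As).
     Ps \<in> tests T (unitS T) (tensS T (spow T A N) C) \<and>
     (\<exists>Om. is_dilation T (spow T A N) C Om (tpow T rho N) \<and>
           sums_to T (tensS T (spow T A N) C) Ps Om) \<and>
     As \<in> tests T (tensS T (spow T A N) C) (unitS T) \<and>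
     2 \<le> length Ps \<and> 2 \<le> length As}"

definition mi_gap :: "('s,'t) opt \<Rightarrow> 't \<Rightarrow> 't \<Rightarrow> 's \<Rightarrow> 't list \<Rightarrow> 't list \<Rightarrow> real" where
  "mi_gap T E D C Ps As =
     (let n = length Ps; m = length As;
          p = (\<lambda>i j. pair T (As ! j) (Ps ! i));
          q = (\<lambda>i j. pair T (As ! j) (seqc T (parc T (seqc T D E) (idt T C)) (Ps ! i)))
      in \<bar>mutual_info n m p - mutual_info n m q\<bar> / log 2 (real (m * n) - 1))"

definition EsetC :: "('s,'t) opt \<Rightarrow> 's \<Rightarrow> 's \<Rightarrow> 't \<Rightarrow> nat \<Rightarrow> nat \<Rightarrow> real \<Rightarrow> ('t \<times> 't) set" where
  "EsetC T Ob A rho N M delta = {(E, D). (E, D) \<in> schemes T Ob A N M \<and>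
     (SUP s\<in>classical_setups T A rho N.
        ereal (mi_gap T E D (fst s) (fst (snd s)) (snd (snd s)))) < ereal delta}"

definition infoC :: "('s,'t) opt \<Rightarrow> 's \<Rightarrow> 's \<Rightarrow> 't \<Rightarrow> ereal" where
  "infoC T Ob A rho = Lim (at_right 0)
     (\<lambda>delta. limsup (\<lambda>N. ereal (real (Inf {M. EsetC T Ob A rho N M delta \<noteq> {}}) / real N)))"

end

theory Submission
  imports Defs
begin

text \<open>
  A compression scheme that is \<open>\<epsilon>\<close>-faithful in operational norm on every refinement of every
  dilation is also faithful for the classical statistics obtained by preparing such a refinement
  and measuring an observation test: coarse-graining the test into a two-outcome one shows that
  the total variation distance between the joint outcome distributions before and after
  compression is at most \<open>\<epsilon>\<close>. Mutual information is uniformly continuous in total variation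
  (a Fannes-type estimate for \<open>\<eta>(x) = -x ln x\<close>), and after the normalisation by
  \<open>log\<^sub>2 (mn - 1)\<close> the gap is at most \<open>13 \<surd>\<epsilon>\<close>. Hence every scheme in \<open>E(N, M, \<epsilon>)\<close> with
  \<open>\<epsilon> = min 1 (\<delta>/26)\<^sup>2\<close> lies in \<open>E\<^sup>C(N, M, \<delta>)\<close>, so \<open>R\<^sup>C(\<delta>) \<le> R(\<epsilon>)\<close>. Digitalizability makes both
  families of schemes nonempty (the identity factors through obits), which makes the rates
  antitone in the tolerance, so both limits exist and are suprema.
\<close>

section \<open>Rates and their limits\<close>

definition rate :: "(nat \<Rightarrow> nat \<Rightarrow> bool) \<Rightarrow> ereal" where
  "rate P = limsup (\<lambda>N. ereal (real (Inf {M. P N M}) / real N))"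

lemma tendsto_SUP_at_right_0_antimono:
  fixes h :: "real \<Rightarrow> ereal"
  assumes antimono: "\<And>x y. 0 < x \<Longrightarrow> x \<le> y \<Longrightarrow> h y \<le> h x"
  shows "(h \<longlongrightarrow> (SUP e\<in>{0<..}. h e)) (at_right 0)"
proof (rule order_tendstoI)
  fix a assume "a < (SUP e\<in>{0<..}. h e)"
  then obtain x0 where "x0 > 0" "a < h x0" by (auto simp: less_SUP_iff)
  then show "\<forall>\<^sub>F x in at_right 0. a < h x"
    unfolding eventually_at_right_field
    using antimono by (intro exI[of _ x0]) (auto intro: less_le_trans)
next
  fix a assume "(SUP e\<in>{0<..}. h e) < a"
  then have "\<And>x. x > 0 \<Longrightarrow> h x < a"
    by (meson SUP_upper greaterThan_iff le_less_trans)
  then show "\<forall>\<^sub>F x in at_right 0. h x < a"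
    unfolding eventually_at_right_field by (intro exI[of _ 1]) auto
qed

lemma Lim_at_right_0_antimono:
  fixes h :: "real \<Rightarrow> ereal"
  assumes "\<And>x y. 0 < x \<Longrightarrow> x \<le> y \<Longrightarrow> h y \<le> h x"
  shows "Lim (at_right 0) h = (SUP e\<in>{0<..}. h e)"
  by (rule tendsto_Lim[OF trivial_limit_at_right_real tendsto_SUP_at_right_0_antimono[OF assms]])

lemma rate_mono:
  assumes "\<And>N M. P N M \<Longrightarrow> Q N M" and "\<And>N. \<exists>M. P N M"
  shows "rate Q \<le> rate P"
  unfolding rate_def
proof (intro Limsup_mono always_eventually allI)
  fix N
  from assms have "Inf {M. Q N M} \<le> Inf {M. P N M}"
    by (intro cInf_superset_mono) auto
  then show "ereal (real (Inf {M. Q N M}) / real N) \<le> ereal (real (Inf {M. P N M}) / real N)"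
    by (simp add: divide_right_mono)
qed

text \<open>
  \<open>P e N M\<close> and \<open>Q d N M\<close> say that \<open>N\<close> copies can be compressed into \<open>M\<close> obits within
  tolerance \<open>e\<close> (resp. \<open>d\<close>).
\<close>
lemma Lim_rate_le:
  fixes P Q :: "real \<Rightarrow> nat \<Rightarrow> nat \<Rightarrow> bool"
  assumes P_mono: "\<And>e e' N M. 0 < e \<Longrightarrow> e \<le> e' \<Longrightarrow> P e N M \<Longrightarrow> P e' N M"
    and Q_mono: "\<And>d d' N M. 0 < d \<Longrightarrow> d \<le> d' \<Longrightarrow> Q d N M \<Longrightarrow> Q d' N M"
    and P_achievable: "\<And>e N. 0 < e \<Longrightarrow> \<exists>M. P e N M"
    and P_imp_Q: "\<And>d. 0 < d \<Longrightarrow> \<exists>e>0. \<forall>N M. P e N M \<longrightarrow> Q d N M"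
  shows "Lim (at_right 0) (\<lambda>d. rate (Q d)) \<le> Lim (at_right 0) (\<lambda>e. rate (P e))"
proof -
  have Q_achievable: "\<exists>M. Q d N M" if "0 < d" for d N
    using P_imp_Q[OF that] P_achievable by blast
  have "rate (P y) \<le> rate (P x)" if "0 < x" "x \<le> y" for x y
    using that P_mono P_achievable by (intro rate_mono) blast+
  then have P_lim: "Lim (at_right 0) (\<lambda>e. rate (P e)) = (SUP e\<in>{0<..}. rate (P e))"
    by (rule Lim_at_right_0_antimono)
  have "rate (Q y) \<le> rate (Q x)" if "0 < x" "x \<le> y" for x y
    using that Q_mono Q_achievable by (intro rate_mono) blast+
  then have Q_lim: "Lim (at_right 0) (\<lambda>d. rate (Q d)) = (SUP d\<in>{0<..}. rate (Q d))"
    by (rule Lim_at_right_0_antimono)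
  have "(SUP d\<in>{0<..}. rate (Q d)) \<le> (SUP e\<in>{0<..}. rate (P e))"
  proof (rule SUP_mono)
    fix d :: real assume "d \<in> {0<..}"
    then obtain e where "e > 0" and "\<forall>N M. P e N M \<longrightarrow> Q d N M"
      using P_imp_Q[of d] by auto
    then have "rate (Q d) \<le> rate (P e)"
      using P_achievable by (intro rate_mono) blast+
    with \<open>e > 0\<close> show "\<exists>e\<in>{0<..}. rate (Q d) \<le> rate (P e)" by auto
  qed
  then show ?thesis unfolding P_lim Q_lim .
qed

section \<open>Continuity of entropy\<close>

text \<open>Since \<open>ln 0 = 0\<close> in Isabelle, this is the continuous extension with \<open>\<eta> 0 = 0\<close>.\<close>
definition neg_xlnx :: "real \<Rightarrow> real" where
  "neg_xlnx x = - x * ln x"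

lemma neg_xlnx_0 [simp]: "neg_xlnx 0 = 0"
  by (simp add: neg_xlnx_def)

lemma neg_xlnx_nonneg: "0 \<le> t \<Longrightarrow> t \<le> 1 \<Longrightarrow> 0 \<le> neg_xlnx t"
  by (cases "t = 0") (auto simp: neg_xlnx_def mult_nonneg_nonpos)

lemma neg_xlnx_subadditive:
  assumes "0 \<le> a" "0 \<le> b"
  shows "neg_xlnx (a + b) \<le> neg_xlnx a + neg_xlnx b"
proof -
  have "u * ln u \<le> u * ln (a + b)" if "0 \<le> u" "u \<le> a + b" for u
    using that by (cases "u = 0") (auto intro: mult_left_mono)
  from this[of a] this[of b] assms show ?thesis
    by (simp add: neg_xlnx_def algebra_simps)
qed

lemma neg_xlnx_diff_le:
  assumes "0 \<le> x" "x \<le> y" "y \<le> 1"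
  shows "neg_xlnx x - neg_xlnx y \<le> y - x"
proof (cases "x = 0")
  case True
  then show ?thesis using assms neg_xlnx_nonneg[of y] by simp
next
  case False
  with assms have "0 < x" "0 < y" by auto
  have "ln y - ln x = ln (y / x)" using \<open>0 < x\<close> \<open>0 < y\<close> by (simp add: ln_div)
  also have "\<dots> \<le> y / x - 1" using \<open>0 < x\<close> \<open>0 < y\<close> by (intro ln_le_minus_one) simp
  finally have "x * (ln y - ln x) \<le> x * (y / x - 1)" using \<open>0 < x\<close> by (intro mult_left_mono) auto
  also have "\<dots> = y - x" using \<open>0 < x\<close> by (simp add: field_simps)
  finally have "x * (ln y - ln x) \<le> y - x" .
  moreover have "(y - x) * ln y \<le> 0" using assms \<open>0 < y\<close> by (simp add: mult_nonneg_nonpos)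
  ultimately show ?thesis by (simp add: neg_xlnx_def algebra_simps)
qed

lemma abs_neg_xlnx_diff_le:
  assumes "0 \<le> x" "x \<le> 1" "0 \<le> y" "y \<le> 1"
  shows "\<bar>neg_xlnx x - neg_xlnx y\<bar> \<le> neg_xlnx \<bar>x - y\<bar> + \<bar>x - y\<bar>"
proof -
  have "\<bar>neg_xlnx u - neg_xlnx v\<bar> \<le> neg_xlnx (v - u) + (v - u)"
    if "0 \<le> u" "u \<le> v" "v \<le> 1" for u v
    using that neg_xlnx_subadditive[of u "v - u"] neg_xlnx_diff_le[of u v]
      neg_xlnx_nonneg[of "v - u"] by (auto simp: abs_if)
  from this[of x y] this[of y x] assms show ?thesis
    by (cases "x \<le> y") (auto simp: abs_minus_commute)
qed

text \<open>Gibbs' inequality for the pair \<open>(t, T/K)\<close>, one summand at a time.\<close>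
lemma neg_xlnx_le:
  assumes "0 \<le> t" "0 < T" "0 < K"
  shows "neg_xlnx t \<le> T / K - t + t * ln K - t * ln T"
proof (cases "t = 0")
  case True
  then show ?thesis using assms by simp
next
  case False
  with assms have "0 < t" by simp
  have "t * ln (T / (K * t)) \<le> t * (T / (K * t) - 1)"
    using \<open>0 < t\<close> assms by (intro mult_left_mono ln_le_minus_one) auto
  also have "\<dots> = T / K - t" using \<open>0 < t\<close> assms by (simp add: field_simps)
  finally have "t * ln (T / (K * t)) \<le> T / K - t" .
  moreover have "ln (T / (K * t)) = ln T - ln K - ln t"
    using \<open>0 < t\<close> assms by (simp add: ln_div ln_mult)
  ultimately show ?thesis by (simp add: neg_xlnx_def algebra_simps)
qed

lemma sum_neg_xlnx_le:
  assumes "finite I" "I \<noteq> {}" and nonneg: "\<And>k. k \<in> I \<Longrightarrow> 0 \<le> t k"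
  shows "(\<Sum>k\<in>I. neg_xlnx (t k)) \<le> (\<Sum>k\<in>I. t k) * ln (card I) + neg_xlnx (\<Sum>k\<in>I. t k)"
proof (cases "(\<Sum>k\<in>I. t k) = 0")
  case True
  then have "\<forall>k\<in>I. t k = 0" using sum_nonneg_eq_0_iff[OF \<open>finite I\<close>] nonneg by blast
  then show ?thesis by simp
next
  case False
  let ?T = "\<Sum>k\<in>I. t k"
  have "0 < ?T" using False sum_nonneg[of I t] nonneg by force
  have "0 < real (card I)" using assms by (simp add: card_gt_0_iff)
  have "(\<Sum>k\<in>I. neg_xlnx (t k)) \<le> (\<Sum>k\<in>I. ?T / card I - t k + t k * ln (card I) - t k * ln ?T)"
    by (intro sum_mono neg_xlnx_le nonneg \<open>0 < ?T\<close> \<open>0 < real (card I)\<close>)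
  also have "\<dots> = (\<Sum>k\<in>I. ?T / card I) - ?T + ?T * ln (card I) - ?T * ln ?T"
    by (simp add: sum.distrib sum_subtractf sum_distrib_right)
  also have "(\<Sum>k\<in>I. ?T / card I) = ?T" using \<open>0 < real (card I)\<close> by simp
  finally show ?thesis by (simp add: neg_xlnx_def)
qed

lemma neg_xlnx_le_sqrt:
  assumes "0 \<le> t"
  shows "neg_xlnx t \<le> 2 * sqrt t"
proof (cases "t = 0")
  case True
  then show ?thesis by simp
next
  case False
  with assms have "0 < t" by simp
  then have "0 < sqrt t" by simp
  have "- ln (sqrt t) = ln (1 / sqrt t)" using \<open>0 < sqrt t\<close> by (simp add: ln_div)
  also have "\<dots> \<le> 1 / sqrt t - 1" using \<open>0 < sqrt t\<close> by (intro ln_le_minus_one) simp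
  finally have "- ln t \<le> 2 / sqrt t"
    using \<open>0 < t\<close> by (simp add: ln_sqrt)
  then have "t * (- ln t) \<le> t * (2 / sqrt t)" using \<open>0 < t\<close> by (intro mult_left_mono) auto
  also have "t * (2 / sqrt t) = 2 * sqrt t" using \<open>0 < t\<close> by (simp add: field_simps)
  finally show ?thesis by (simp add: neg_xlnx_def)
qed

lemma sum_neg_xlnx_diff_le:
  assumes "finite I" "I \<noteq> {}"
    and x: "\<And>k. k \<in> I \<Longrightarrow> 0 \<le> x k \<and> x k \<le> 1"
    and y: "\<And>k. k \<in> I \<Longrightarrow> 0 \<le> y k \<and> y k \<le> 1"
    and tv: "(\<Sum>k\<in>I. \<bar>x k - y k\<bar>) \<le> s"
  shows "\<bar>(\<Sum>k\<in>I. neg_xlnx (x k)) - (\<Sum>k\<in>I. neg_xlnx (y k))\<bar> \<le> s * ln (card I) + 2 * sqrt s + s"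
proof -
  let ?t = "\<Sum>k\<in>I. \<bar>x k - y k\<bar>"
  have "\<bar>(\<Sum>k\<in>I. neg_xlnx (x k)) - (\<Sum>k\<in>I. neg_xlnx (y k))\<bar>
      \<le> (\<Sum>k\<in>I. \<bar>neg_xlnx (x k) - neg_xlnx (y k)\<bar>)"
    by (metis sum_abs sum_subtractf)
  also have "\<dots> \<le> (\<Sum>k\<in>I. neg_xlnx \<bar>x k - y k\<bar> + \<bar>x k - y k\<bar>)"
    using x y by (intro sum_mono abs_neg_xlnx_diff_le) auto
  also have "\<dots> = (\<Sum>k\<in>I. neg_xlnx \<bar>x k - y k\<bar>) + ?t"
    by (simp add: sum.distrib)
  also have "\<dots> \<le> ?t * ln (card I) + neg_xlnx ?t + ?t"
    using sum_neg_xlnx_le[OF assms(1,2), of "\<lambda>k. \<bar>x k - y k\<bar>"] by simp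
  also have "\<dots> \<le> s * ln (card I) + 2 * sqrt s + s"
  proof -
    have "0 \<le> ?t" by (simp add: sum_nonneg)
    have "0 \<le> ln (real (card I))" using assms(1,2) by (simp add: card_gt_0_iff Suc_le_eq)
    then have "?t * ln (card I) \<le> s * ln (card I)" using tv by (simp add: mult_right_mono)
    moreover have "neg_xlnx ?t \<le> 2 * sqrt s"
      using neg_xlnx_le_sqrt[OF \<open>0 \<le> ?t\<close>] real_sqrt_le_mono[OF tv] by linarith
    ultimately show ?thesis using tv by linarith
  qed
  finally show ?thesis .
qed

section \<open>Continuity of mutual information\<close>

definition joint_distribution :: "nat \<Rightarrow> nat \<Rightarrow> (nat \<Rightarrow> nat \<Rightarrow> real) \<Rightarrow> bool" where
  "joint_distribution n m p \<longleftrightarrow> (\<forall>i<n. \<forall>j<m. 0 \<le> p i j) \<and> (\<Sum>i<n. \<Sum>j<m. p i j) = 1"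

lemma joint_distribution_transpose:
  "joint_distribution n m p \<Longrightarrow> joint_distribution m n (\<lambda>j i. p i j)"
  unfolding joint_distribution_def by (simp add: sum.swap[of _ "{..<m}"])

lemma joint_distribution_row_sum_bounds:
  assumes "joint_distribution n m p" "i < n"
  shows "0 \<le> (\<Sum>j<m. p i j) \<and> (\<Sum>j<m. p i j) \<le> 1"
proof -
  have "(\<Sum>j<m. p i j) \<le> (\<Sum>i<n. \<Sum>j<m. p i j)"
    using assms unfolding joint_distribution_def
    by (intro member_le_sum sum_nonneg) auto
  then show ?thesis using assms unfolding joint_distribution_def by (auto intro: sum_nonneg)
qed

lemma joint_distribution_entry_bounds:
  assumes "joint_distribution n m p" "i < n" "j < m"
  shows "0 \<le> p i j \<and> p i j \<le> 1"
proof -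
  have "p i j \<le> (\<Sum>j<m. p i j)"
    using assms unfolding joint_distribution_def by (intro member_le_sum) auto
  then show ?thesis
    using assms joint_distribution_row_sum_bounds[OF assms(1,2)]
    unfolding joint_distribution_def by auto
qed

lemma mutual_info_summand_eq:
  fixes p a b :: real
  assumes "0 \<le> p" "p \<le> a" "p \<le> b"
  shows "(if p = 0 then 0 else p * log 2 (p / (a * b))) * ln 2
    = - neg_xlnx p - p * ln a - p * ln b"
proof (cases "p = 0")
  case False
  with assms have "0 < p" "0 < a" "0 < b" by auto
  then have "log 2 (p / (a * b)) * ln 2 = ln p - ln a - ln b"
    by (simp add: log_def ln_div ln_mult)
  then have "p * log 2 (p / (a * b)) * ln 2 = p * (ln p - ln a - ln b)"
    by (simp add: mult.assoc)
  with False show ?thesis by (simp add: neg_xlnx_def algebra_simps)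
qed simp

lemma mutual_info_eq_entropies:
  fixes p :: "nat \<Rightarrow> nat \<Rightarrow> real"
  assumes nonneg: "\<And>i j. i < n \<Longrightarrow> j < m \<Longrightarrow> 0 \<le> p i j"
  shows "mutual_info n m p * ln 2 =
     (\<Sum>i<n. neg_xlnx (\<Sum>j<m. p i j)) + (\<Sum>j<m. neg_xlnx (\<Sum>i<n. p i j))
       - (\<Sum>i<n. \<Sum>j<m. neg_xlnx (p i j))"
proof -
  have "mutual_info n m p * ln 2 = (\<Sum>i<n. \<Sum>j<m.
     (if p i j = 0 then 0 else p i j * log 2 (p i j / ((\<Sum>j'<m. p i j') * (\<Sum>i'<n. p i' j)))) * ln 2)"
    unfolding mutual_info_def by (simp add: sum_distrib_right)
  also have "\<dots> = (\<Sum>i<n. \<Sum>j<m.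
     - neg_xlnx (p i j) - p i j * ln (\<Sum>j'<m. p i j') - p i j * ln (\<Sum>i'<n. p i' j))"
  proof (intro sum.cong refl mutual_info_summand_eq)
    fix i j assume "i \<in> {..<n}" "j \<in> {..<m}"
    with nonneg show "0 \<le> p i j" "p i j \<le> (\<Sum>j'<m. p i j')" "p i j \<le> (\<Sum>i'<n. p i' j)"
      by (auto intro: member_le_sum[of _ _ "\<lambda>j'. p i j'"] member_le_sum[of _ _ "\<lambda>i'. p i' j"])
  qed
  also have "\<dots> = - (\<Sum>i<n. \<Sum>j<m. neg_xlnx (p i j))
       - (\<Sum>i<n. \<Sum>j<m. p i j * ln (\<Sum>j'<m. p i j'))
       - (\<Sum>i<n. \<Sum>j<m. p i j * ln (\<Sum>i'<n. p i' j))"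
    by (simp add: sum_subtractf sum_negf)
  also have "(\<Sum>i<n. \<Sum>j<m. p i j * ln (\<Sum>j'<m. p i j')) = - (\<Sum>i<n. neg_xlnx (\<Sum>j<m. p i j))"
    by (simp add: neg_xlnx_def sum_distrib_right[symmetric] sum_negf)
  also have "(\<Sum>i<n. \<Sum>j<m. p i j * ln (\<Sum>i'<n. p i' j)) = - (\<Sum>j<m. neg_xlnx (\<Sum>i<n. p i j))"
    by (subst sum.swap) (simp add: neg_xlnx_def sum_distrib_right[symmetric] sum_negf)
  finally show ?thesis by simp
qed

lemma row_entropy_diff_le:
  assumes "0 < n" "joint_distribution n m p" "joint_distribution n m q"
    and tv: "(\<Sum>i<n. \<Sum>j<m. \<bar>p i j - q i j\<bar>) \<le> s"
  shows "\<bar>(\<Sum>i<n. neg_xlnx (\<Sum>j<m. p i j)) - (\<Sum>i<n. neg_xlnx (\<Sum>j<m. q i j))\<bar>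
    \<le> s * ln n + 2 * sqrt s + s"
proof -
  have "(\<Sum>i<n. \<bar>(\<Sum>j<m. p i j) - (\<Sum>j<m. q i j)\<bar>) \<le> (\<Sum>i<n. \<Sum>j<m. \<bar>p i j - q i j\<bar>)"
    by (intro sum_mono) (metis sum_abs sum_subtractf)
  with tv have "(\<Sum>i<n. \<bar>(\<Sum>j<m. p i j) - (\<Sum>j<m. q i j)\<bar>) \<le> s" by linarith
  then have "\<bar>(\<Sum>i<n. neg_xlnx (\<Sum>j<m. p i j)) - (\<Sum>i<n. neg_xlnx (\<Sum>j<m. q i j))\<bar>
      \<le> s * ln (card {..<n}) + 2 * sqrt s + s"
    using assms by (intro sum_neg_xlnx_diff_le) (auto simp: joint_distribution_row_sum_bounds)
  then show ?thesis by simp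
qed

lemma entry_entropy_diff_le:
  assumes "0 < n" "0 < m" "joint_distribution n m p" "joint_distribution n m q"
    and tv: "(\<Sum>i<n. \<Sum>j<m. \<bar>p i j - q i j\<bar>) \<le> s"
  shows "\<bar>(\<Sum>i<n. \<Sum>j<m. neg_xlnx (p i j)) - (\<Sum>i<n. \<Sum>j<m. neg_xlnx (q i j))\<bar>
    \<le> s * ln (real (n * m)) + 2 * sqrt s + s"
proof -
  let ?I = "{..<n} \<times> {..<m}"
  have double_sum: "(\<Sum>i<n. \<Sum>j<m. f i j) = (\<Sum>k\<in>?I. f (fst k) (snd k))"
    for f :: "nat \<Rightarrow> nat \<Rightarrow> real"
    by (simp add: sum.cartesian_product case_prod_beta)
  have "\<bar>(\<Sum>k\<in>?I. neg_xlnx (p (fst k) (snd k))) - (\<Sum>k\<in>?I. neg_xlnx (q (fst k) (snd k)))\<bar>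
      \<le> s * ln (card ?I) + 2 * sqrt s + s"
    using assms joint_distribution_entry_bounds double_sum[of "\<lambda>i j. \<bar>p i j - q i j\<bar>"]
    by (intro sum_neg_xlnx_diff_le) auto
  then show ?thesis
    by (simp add: double_sum[of "\<lambda>i j. neg_xlnx (p i j)"] double_sum[of "\<lambda>i j. neg_xlnx (q i j)"])
qed

lemma mutual_info_diff_le:
  assumes "0 < n" "0 < m" and p: "joint_distribution n m p" and q: "joint_distribution n m q"
    and tv: "(\<Sum>i<n. \<Sum>j<m. \<bar>p i j - q i j\<bar>) \<le> s"
  shows "\<bar>mutual_info n m p - mutual_info n m q\<bar> * ln 2 \<le> 2 * s * ln (real (n * m)) + 6 * sqrt s + 3 * s"
proof -
  have rows: "\<bar>(\<Sum>i<n. neg_xlnx (\<Sum>j<m. p i j)) - (\<Sum>i<n. neg_xlnx (\<Sum>j<m. q i j))\<bar>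
      \<le> s * ln n + 2 * sqrt s + s"
    by (rule row_entropy_diff_le[OF \<open>0 < n\<close> p q tv])
  have "(\<Sum>j<m. \<Sum>i<n. \<bar>p i j - q i j\<bar>) \<le> s"
    using tv by (simp add: sum.swap[of _ "{..<m}"])
  then have cols: "\<bar>(\<Sum>j<m. neg_xlnx (\<Sum>i<n. p i j)) - (\<Sum>j<m. neg_xlnx (\<Sum>i<n. q i j))\<bar>
      \<le> s * ln m + 2 * sqrt s + s"
    using row_entropy_diff_le[OF \<open>0 < m\<close> joint_distribution_transpose[OF p]
        joint_distribution_transpose[OF q]] by simp
  have entries: "\<bar>(\<Sum>i<n. \<Sum>j<m. neg_xlnx (p i j)) - (\<Sum>i<n. \<Sum>j<m. neg_xlnx (q i j))\<bar>
      \<le> s * ln (real (n * m)) + 2 * sqrt s + s"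
    by (rule entry_entropy_diff_le[OF assms])
  have "s * ln n + s * ln m = s * ln (real (n * m))"
    using assms by (simp add: ln_mult distrib_left)
  moreover have "\<bar>mutual_info n m p - mutual_info n m q\<bar> * ln 2
      = \<bar>mutual_info n m p * ln 2 - mutual_info n m q * ln 2\<bar>"
    by (simp add: abs_mult left_diff_distrib[symmetric])
  ultimately show ?thesis
    using rows cols entries p q
      mutual_info_eq_entropies[of n m p] mutual_info_eq_entropies[of n m q]
    unfolding joint_distribution_def by auto
qed

lemma ln_ge_1_if_ge_3: "3 \<le> x \<Longrightarrow> 1 \<le> ln (x :: real)"
  using ln_ge_iff[of x 1] exp_le by auto

lemma ln_add_1_le_twice_ln:
  fixes x :: real
  assumes "3 \<le> x"
  shows "ln (x + 1) \<le> 2 * ln x"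
proof -
  have "x + 1 \<le> x * x" using assms mult_right_mono[of 3 x x] by linarith
  then have "ln (x + 1) \<le> ln (x * x)" using assms by simp
  also have "\<dots> = 2 * ln x" using assms by (simp add: ln_mult)
  finally show ?thesis .
qed

lemma mutual_info_continuity:
  assumes "2 \<le> n" "2 \<le> m" "joint_distribution n m p" "joint_distribution n m q"
    and tv: "(\<Sum>i<n. \<Sum>j<m. \<bar>p i j - q i j\<bar>) \<le> s" and "s \<le> 1"
  shows "\<bar>mutual_info n m p - mutual_info n m q\<bar> / log 2 (real (m * n) - 1) \<le> 13 * sqrt s"
proof -
  define L where "L = real (m * n) - 1"
  have "0 \<le> s" using tv by (meson order_trans sum_nonneg abs_ge_zero)
  have "4 \<le> m * n" using mult_le_mono[OF \<open>2 \<le> m\<close> \<open>2 \<le> n\<close>] by simp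
  then have "3 \<le> L" unfolding L_def by linarith
  then have "1 \<le> ln L" by (rule ln_ge_1_if_ge_3)
  have "ln (real (n * m)) \<le> 2 * ln L"
    using ln_add_1_le_twice_ln[OF \<open>3 \<le> L\<close>] unfolding L_def by (simp add: mult.commute)
  have mi_diff: "\<bar>mutual_info n m p - mutual_info n m q\<bar> * ln 2 \<le> 2 * s * ln (real (n * m)) + 6 * sqrt s + 3 * s"
    using assms by (intro mutual_info_diff_le) auto
  have "\<bar>mutual_info n m p - mutual_info n m q\<bar> / log 2 L
      = \<bar>mutual_info n m p - mutual_info n m q\<bar> * ln 2 / ln L"
    by (simp add: log_def)
  also have "\<dots> \<le> (2 * s * ln (real (n * m)) + 6 * sqrt s + 3 * s) / ln L"
    using mi_diff \<open>1 \<le> ln L\<close> by (intro divide_right_mono) auto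
  also have "\<dots> \<le> 4 * s + 6 * sqrt s + 3 * s"
  proof -
    have "2 * s * ln (real (n * m)) \<le> 4 * s * ln L"
      using mult_left_mono[OF \<open>ln (real (n * m)) \<le> 2 * ln L\<close>, of "2 * s"] \<open>0 \<le> s\<close> by simp
    moreover have "6 * sqrt s + 3 * s \<le> (6 * sqrt s + 3 * s) * ln L"
      using mult_left_mono[OF \<open>1 \<le> ln L\<close>, of "6 * sqrt s + 3 * s"] \<open>0 \<le> s\<close> by simp
    ultimately show ?thesis
      using \<open>1 \<le> ln L\<close> by (simp add: divide_le_eq algebra_simps)
  qed
  also have "\<dots> \<le> 13 * sqrt s"
    using \<open>0 \<le> s\<close> \<open>s \<le> 1\<close> sqrt_le_D[of s 1] real_sqrt_le_mono[of s 1]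
      mult_right_le_one_le[of "sqrt s" "sqrt s"] by (simp add: real_sqrt_mult_self)
  finally show ?thesis unfolding L_def .
qed

lemma sum_list_concat_map_nth:
  "sum_list (map f [g u v. u \<leftarrow> U, v \<leftarrow> V])
    = (\<Sum>i<length U. \<Sum>j<length V. f (g (U ! i) (V ! j)))"
proof (induction U)
  case (Cons u U)
  have "sum_list (map f (map (g u) V)) = (\<Sum>j<length V. f (g u (V ! j)))"
    by (simp add: sum_list_sum_nth atLeast0LessThan)
  with Cons show ?case by (simp add: sum.lessThan_Suc_shift del: sum.lessThan_Suc)
qed simp

context
  fixes T :: "('s, 't) opt"
  assumes opt: "is_opt T"
begin

lemma tensS_unit: "tensS T A (unitS T) = A"
  using opt by (simp add: is_opt_def)

lemma id_test: "[idt T A] \<in> tests T A A"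
  using opt by (simp add: is_opt_def)

lemma seq_test: "U \<in> tests T A B \<Longrightarrow> V \<in> tests T B C \<Longrightarrow>
    [seqc T v u. u \<leftarrow> U, v \<leftarrow> V] \<in> tests T A C"
  using opt by (simp add: is_opt_def)

lemma par_test: "U \<in> tests T A B \<Longrightarrow> V \<in> tests T C D \<Longrightarrow>
    [parc T u v. u \<leftarrow> U, v \<leftarrow> V] \<in> tests T (tensS T A C) (tensS T B D)"
  using opt by (simp add: is_opt_def)

lemma seqc_idt: "f \<in> Tr T A B \<Longrightarrow> seqc T f (idt T A) = f \<and> seqc T (idt T B) f = f"
  using opt by (simp add: is_opt_def)

lemma parc_idt_unit: "f \<in> Tr T A B \<Longrightarrow> parc T f (idt T (unitS T)) = f"
  using opt by (simp add: is_opt_def)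

lemma parc_idt_idt: "parc T (idt T A) (idt T B) = idt T (tensS T A B)"
  using opt by (simp add: is_opt_def)

lemma prob_test: "U \<in> tests T (unitS T) (unitS T) \<Longrightarrow>
    (\<forall>t\<in>set U. 0 \<le> prob T t) \<and> sum_list (map (prob T) U) = 1"
  using opt by (simp add: is_opt_def)

lemma coarse_graining: "U \<in> tests T A B \<Longrightarrow> \<forall>i<length U. c i < k \<Longrightarrow>
    \<exists>V\<in>tests T A B. length V = k \<and>
      (\<forall>l<k. \<forall>C psi b. psi \<in> St T (tensS T A C) \<longrightarrow> b \<in> Eff T (tensS T B C) \<longrightarrow>
         circ T C b (V ! l) psi = (\<Sum>i\<in>{i. i < length U \<and> c i = l}. circ T C b (U ! i) psi))"
  using opt unfolding is_opt_def by blast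

lemma nth_in_Tr: "U \<in> tests T A B \<Longrightarrow> i < length U \<Longrightarrow> U ! i \<in> Tr T A B"
  unfolding Tr_def using nth_mem by blast

lemma seqc_Tr:
  assumes "u \<in> Tr T A B" "v \<in> Tr T B C"
  shows "seqc T v u \<in> Tr T A C"
proof -
  obtain U V where U: "U \<in> tests T A B" "u \<in> set U" and V: "V \<in> tests T B C" "v \<in> set V"
    using assms unfolding Tr_def by blast
  then have "seqc T v u \<in> set [seqc T v u. u \<leftarrow> U, v \<leftarrow> V]" by auto
  with seq_test[OF U(1) V(1)] show ?thesis unfolding Tr_def by blast
qed

lemma observation_joint_distribution:
  assumes U: "U \<in> tests T (unitS T) S" and V: "V \<in> tests T S (unitS T)"
  shows "joint_distribution (length U) (length V) (\<lambda>i j. pair T (V ! j) (U ! i))"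
proof -
  let ?W = "[seqc T v u. u \<leftarrow> U, v \<leftarrow> V]"
  have W: "?W \<in> tests T (unitS T) (unitS T)" using seq_test[OF U V] .
  have "sum_list (map (prob T) ?W) = (\<Sum>i<length U. \<Sum>j<length V. prob T (seqc T (V ! j) (U ! i)))"
    by (rule sum_list_concat_map_nth)
  moreover have "0 \<le> prob T (seqc T (V ! j) (U ! i))" if "i < length U" "j < length V" for i j
    using prob_test[OF W] that by auto
  ultimately show ?thesis
    using prob_test[OF W] unfolding joint_distribution_def pair_def by simp
qed

lemma pair_bounds:
  assumes "a \<in> Eff T S" "x \<in> St T S"
  shows "0 \<le> pair T a x" "pair T a x \<le> 1"
proof -
  obtain U V where U: "U \<in> tests T (unitS T) S" "x \<in> set U"
    and V: "V \<in> tests T S (unitS T)" "a \<in> set V"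
    using assms unfolding Eff_def St_def Tr_def by blast
  then obtain i j where "i < length U" "x = U ! i" "j < length V" "a = V ! j"
    by (metis in_set_conv_nth)
  with joint_distribution_entry_bounds[OF observation_joint_distribution[OF U(1) V(1)]]
  show "0 \<le> pair T a x" "pair T a x \<le> 1" by auto
qed

lemma circ_unit_eq_pair:
  assumes "f \<in> Tr T S (unitS T)" "psi \<in> St T S"
  shows "circ T (unitS T) (idt T (unitS T)) f psi = pair T f psi"
proof -
  have "seqc T f psi \<in> Tr T (unitS T) (unitS T)"
    using seqc_Tr assms unfolding St_def by blast
  then show ?thesis
    unfolding circ_def pair_def using parc_idt_unit[OF assms(1)] seqc_idt by simp
qed

lemma coarse_graining_effects:
  assumes U: "U \<in> tests T S (unitS T)" and c: "\<forall>i<length U. c i < k"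
  shows "\<exists>V\<in>tests T S (unitS T). length V = k \<and>
    (\<forall>l<k. \<forall>psi\<in>St T S. pair T (V ! l) psi = (\<Sum>i\<in>{i. i < length U \<and> c i = l}. pair T (U ! i) psi))"
proof -
  obtain V where V: "V \<in> tests T S (unitS T)" "length V = k"
    and cg: "\<forall>l<k. \<forall>C psi b. psi \<in> St T (tensS T S C) \<longrightarrow> b \<in> Eff T (tensS T (unitS T) C) \<longrightarrow>
        circ T C b (V ! l) psi = (\<Sum>i\<in>{i. i < length U \<and> c i = l}. circ T C b (U ! i) psi)"
    using coarse_graining[OF U c] by blast
  have "idt T (unitS T) \<in> Eff T (tensS T (unitS T) (unitS T))"
    using id_test[of "unitS T"] unfolding Eff_def Tr_def tensS_unit by force
  moreover have "psi \<in> St T (tensS T S (unitS T))" if "psi \<in> St T S" for psi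
    using that by (simp add: tensS_unit)
  ultimately have circ_sum: "circ T (unitS T) (idt T (unitS T)) (V ! l) psi
      = (\<Sum>i\<in>{i. i < length U \<and> c i = l}. circ T (unitS T) (idt T (unitS T)) (U ! i) psi)"
    if "l < k" "psi \<in> St T S" for l psi
    using cg that by blast
  have "pair T (V ! l) psi = (\<Sum>i\<in>{i. i < length U \<and> c i = l}. pair T (U ! i) psi)"
    if "l < k" "psi \<in> St T S" for l psi
  proof -
    have "(\<Sum>i\<in>{i. i < length U \<and> c i = l}. circ T (unitS T) (idt T (unitS T)) (U ! i) psi)
        = (\<Sum>i\<in>{i. i < length U \<and> c i = l}. pair T (U ! i) psi)"
      using U that by (intro sum.cong refl circ_unit_eq_pair nth_in_Tr) auto
    moreover have "circ T (unitS T) (idt T (unitS T)) (V ! l) psi = pair T (V ! l) psi"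
      using V that by (intro circ_unit_eq_pair nth_in_Tr) auto
    ultimately show ?thesis using circ_sum[OF that] by simp
  qed
  with V show ?thesis by blast
qed

lemma channel_after_preparation:
  assumes "[Phi] \<in> tests T S S'" "Ps \<in> tests T (unitS T) S"
  shows "map (seqc T Phi) Ps \<in> tests T (unitS T) S'"
proof -
  have "[seqc T v u. u \<leftarrow> Ps, v \<leftarrow> [Phi]] = map (seqc T Phi) Ps"
    by (induction Ps) auto
  then show ?thesis using seq_test[OF assms(2,1)] by simp
qed

lemma scheme_channel_test:
  assumes "(E, D) \<in> schemes T Ob A N M"
  shows "[parc T (seqc T D E) (idt T C)] \<in> tests T (tensS T (spow T A N) C) (tensS T (spow T A N) C)"
proof -
  have "[E] \<in> tests T (spow T A N) (spow T Ob M)" "[D] \<in> tests T (spow T Ob M) (spow T A N)"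
    using assms unfolding schemes_def Tr1_def by auto
  from seq_test[OF this] have "[seqc T D E] \<in> tests T (spow T A N) (spow T A N)"
    by simp
  from par_test[OF this id_test] show ?thesis by simp
qed

end

lemma sum_abs_eq_twice_positive_part:
  fixes d :: "'a \<Rightarrow> real"
  assumes "finite A"
  shows "(\<Sum>j\<in>A. \<bar>d j\<bar>) = 2 * (\<Sum>j\<in>A \<inter> {j. d j > 0}. d j) - (\<Sum>j\<in>A. d j)"
proof -
  have "(\<Sum>j\<in>A. \<bar>d j\<bar>) = (\<Sum>j\<in>A \<inter> {j. d j > 0}. \<bar>d j\<bar>) + (\<Sum>j\<in>A - {j. d j > 0}. \<bar>d j\<bar>)"
    by (rule sum.Int_Diff[OF assms])
  also have "\<dots> = (\<Sum>j\<in>A \<inter> {j. d j > 0}. d j) + (\<Sum>j\<in>A - {j. d j > 0}. - d j)"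
    by (intro arg_cong2[where f = "(+)"] sum.cong) auto
  finally have "(\<Sum>j\<in>A. \<bar>d j\<bar>) = (\<Sum>j\<in>A \<inter> {j. d j > 0}. d j) - (\<Sum>j\<in>A - {j. d j > 0}. d j)"
    by (simp add: sum_negf)
  moreover have "(\<Sum>j\<in>A. d j) = (\<Sum>j\<in>A \<inter> {j. d j > 0}. d j) + (\<Sum>j\<in>A - {j. d j > 0}. d j)"
    by (rule sum.Int_Diff[OF assms])
  ultimately show ?thesis by linarith
qed

context
  fixes T :: "('s, 't) opt"
  assumes opt: "is_opt T" and sc: "strongly_causal T"
begin

lemma detE_eqI:
  assumes "[e] \<in> tests T S (unitS T)"
  shows "detE T S = e"
proof -
  have "\<exists>!e. [e] \<in> tests T S (unitS T)" using sc unfolding strongly_causal_def by blast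
  then show ?thesis unfolding detE_def using assms by (rule the1_equality)
qed

lemma detE_Eff: "detE T S \<in> Eff T S"
proof -
  obtain e where e: "[e] \<in> tests T S (unitS T)" using sc unfolding strongly_causal_def by blast
  then have "detE T S \<in> set [e]" using detE_eqI by simp
  with e show ?thesis unfolding Eff_def Tr_def by blast
qed

lemma pair_detE_eq_sum:
  assumes U: "U \<in> tests T S (unitS T)" and psi: "psi \<in> St T S"
  shows "pair T (detE T S) psi = (\<Sum>i<length U. pair T (U ! i) psi)"
proof -
  obtain V where V: "V \<in> tests T S (unitS T)" "length V = 1"
    and cg: "\<forall>psi\<in>St T S. pair T (V ! 0) psi = (\<Sum>i\<in>{i. i < length U}. pair T (U ! i) psi)"
    using coarse_graining_effects[OF opt U, of "\<lambda>_. 0" 1] by auto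
  then obtain w where "V = [w]" by (cases V) auto
  with V have "detE T S = w" using detE_eqI by simp
  with cg psi \<open>V = [w]\<close> show ?thesis by (simp add: lessThan_def)
qed

text \<open>
  Coarse-graining \<open>U\<close> to the two-outcome test that collects the outcomes with
  \<open>pair T (U ! j) x > pair T (U ! j) y\<close> gives an effect attaining the left-hand side.
\<close>
lemma sum_abs_pair_diff_le_opnorm:
  assumes U: "U \<in> tests T S (unitS T)" and x: "x \<in> St T S" and y: "y \<in> St T S"
  shows "(\<Sum>j<length U. \<bar>pair T (U ! j) x - pair T (U ! j) y\<bar>) \<le> opnorm_diff T S x y"
proof -
  define d where "d j = pair T (U ! j) x - pair T (U ! j) y" for j
  define c where "c j = (if d j > 0 then 0 else 1::nat)" for j
  have "\<forall>i<length U. c i < 2" unfolding c_def by simp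
  then obtain V where V: "V \<in> tests T S (unitS T)" "length V = 2"
    and cg: "\<forall>l<2. \<forall>psi\<in>St T S. pair T (V ! l) psi = (\<Sum>i\<in>{i. i < length U \<and> c i = l}. pair T (U ! i) psi)"
    using coarse_graining_effects[OF opt U] by blast
  have "{i. i < length U \<and> c i = 0} = {..<length U} \<inter> {j. d j > 0}" unfolding c_def by auto
  then have pos: "pair T (V ! 0) x - pair T (V ! 0) y = (\<Sum>j\<in>{..<length U} \<inter> {j. d j > 0}. d j)"
    using cg x y unfolding d_def by (simp add: sum_subtractf)
  have all: "pair T (detE T S) x - pair T (detE T S) y = (\<Sum>j<length U. d j)"
    using pair_detE_eq_sum[OF U x] pair_detE_eq_sum[OF U y] unfolding d_def by (simp add: sum_subtractf)
  have "(\<Sum>j<length U. \<bar>d j\<bar>) = 2 * (pair T (V ! 0) x - pair T (V ! 0) y)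
      - (pair T (detE T S) x - pair T (detE T S) y)"
    unfolding pos all by (rule sum_abs_eq_twice_positive_part) simp
  also have "\<dots> \<le> opnorm_diff T S x y"
    unfolding opnorm_diff_def
  proof (rule cSup_upper)
    show "bdd_above ((\<lambda>a. 2 * pair T a x - pair T (detE T S) x - (2 * pair T a y - pair T (detE T S) y)) ` Eff T S)"
    proof (rule bdd_aboveI2)
      fix a assume "a \<in> Eff T S"
      from pair_bounds[OF opt this x] pair_bounds[OF opt this y]
        pair_bounds[OF opt detE_Eff x] pair_bounds[OF opt detE_Eff y]
      show "2 * pair T a x - pair T (detE T S) x - (2 * pair T a y - pair T (detE T S) y) \<le> 3"
        by linarith
    qed
  qed (use nth_in_Tr[OF opt V(1)] V(2) in \<open>simp add: Eff_def\<close>)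
  finally show ?thesis unfolding d_def .
qed

end

section \<open>Operational versus classical faithfulness\<close>

lemma Eset_mono: "eps \<le> eps' \<Longrightarrow> Eset T Ob A rho N M eps \<subseteq> Eset T Ob A rho N M eps'"
  unfolding Eset_def by (auto intro: less_le_trans)

lemma EsetC_mono: "delta \<le> delta' \<Longrightarrow> EsetC T Ob A rho N M delta \<subseteq> EsetC T Ob A rho N M delta'"
  unfolding EsetC_def by (auto intro: less_le_trans)

context
  fixes T :: "('s, 't) opt"
  assumes opt: "is_opt T" and sc: "strongly_causal T"
begin

lemma outcome_tv_le_opnorm:
  assumes Ps: "Ps \<in> tests T (unitS T) S" and As: "As \<in> tests T S (unitS T)"
    and Phi: "[Phi] \<in> tests T S S"
  shows "(\<Sum>i<length Ps. \<Sum>j<length As.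
      \<bar>pair T (As ! j) (Ps ! i) - pair T (As ! j) (seqc T Phi (Ps ! i))\<bar>)
    \<le> (\<Sum>Psi\<leftarrow>Ps. opnorm_diff T S (seqc T Phi Psi) Psi)"
proof -
  have "Ps ! i \<in> St T S" "seqc T Phi (Ps ! i) \<in> St T S" if "i < length Ps" for i
    using that Ps channel_after_preparation[OF opt Phi Ps] unfolding St_def Tr_def by force+
  then have "(\<Sum>j<length As. \<bar>pair T (As ! j) (seqc T Phi (Ps ! i)) - pair T (As ! j) (Ps ! i)\<bar>)
      \<le> opnorm_diff T S (seqc T Phi (Ps ! i)) (Ps ! i)" if "i < length Ps" for i
    using that by (intro sum_abs_pair_diff_le_opnorm[OF opt sc As])
  then have "(\<Sum>i<length Ps. \<Sum>j<length As.
      \<bar>pair T (As ! j) (Ps ! i) - pair T (As ! j) (seqc T Phi (Ps ! i))\<bar>)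
    \<le> (\<Sum>i<length Ps. opnorm_diff T S (seqc T Phi (Ps ! i)) (Ps ! i))"
    by (intro sum_mono) (simp add: abs_minus_commute)
  then show ?thesis by (simp add: sum_list_sum_nth atLeast0LessThan)
qed

lemma classical_setup_refinement:
  assumes "(C, Ps, As) \<in> classical_setups T A rho N"
  shows "(C, Ps) \<in> refs_of_dil T A rho N"
proof -
  have "distinct [0..<length Ps] \<and> set [0..<length Ps] \<subseteq> {..<length Ps}
      \<and> Ps = map (\<lambda>i. Ps ! i) [0..<length Ps]"
    by (auto simp: map_nth)
  then show ?thesis using assms unfolding classical_setups_def refs_of_dil_def is_refinement_def by blast
qed

lemma mi_gap_le_sqrt_opnorm:
  assumes sch: "(E, D) \<in> schemes T Ob A N M" and cs: "(C, Ps, As) \<in> classical_setups T A rho N"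
    and opnorm: "(\<Sum>Psi\<leftarrow>Ps. opnorm_diff T (tensS T (spow T A N) C)
        (seqc T (parc T (seqc T D E) (idt T C)) Psi) Psi) \<le> eps"
    and "eps \<le> 1"
  shows "mi_gap T E D C Ps As \<le> 13 * sqrt eps"
proof -
  define S where "S = tensS T (spow T A N) C"
  define Phi where "Phi = parc T (seqc T D E) (idt T C)"
  have Ps: "Ps \<in> tests T (unitS T) S" and As: "As \<in> tests T S (unitS T)"
    and "2 \<le> length Ps" "2 \<le> length As"
    using cs unfolding classical_setups_def S_def by auto
  have Phi: "[Phi] \<in> tests T S S"
    unfolding Phi_def S_def by (rule scheme_channel_test[OF opt sch])
  have "joint_distribution (length Ps) (length As) (\<lambda>i j. pair T (As ! j) (Ps ! i))"
    by (rule observation_joint_distribution[OF opt Ps As])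
  moreover have "joint_distribution (length Ps) (length As) (\<lambda>i j. pair T (As ! j) (seqc T Phi (Ps ! i)))"
    using observation_joint_distribution[OF opt channel_after_preparation[OF opt Phi Ps] As]
    by (simp add: joint_distribution_def)
  moreover have "(\<Sum>i<length Ps. \<Sum>j<length As.
      \<bar>pair T (As ! j) (Ps ! i) - pair T (As ! j) (seqc T Phi (Ps ! i))\<bar>) \<le> eps"
    using outcome_tv_le_opnorm[OF Ps As Phi] opnorm unfolding S_def Phi_def by linarith
  ultimately show ?thesis
    using mutual_info_continuity[OF \<open>2 \<le> length Ps\<close> \<open>2 \<le> length As\<close>] \<open>eps \<le> 1\<close>
    unfolding mi_gap_def Let_def Phi_def by blast
qed

lemma Eset_subset_EsetC:
  assumes "0 < delta"
  shows "Eset T Ob A rho N M (min 1 ((delta / 26)\<^sup>2)) \<subseteq> EsetC T Ob A rho N M delta"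
proof (clarify)
  fix E D assume ED: "(E, D) \<in> Eset T Ob A rho N M (min 1 ((delta / 26)\<^sup>2))"
  define eps where "eps = min 1 ((delta / 26)\<^sup>2)"
  have "13 * sqrt eps \<le> delta / 2"
    using real_sqrt_le_mono[of eps "(delta / 26)\<^sup>2"] \<open>0 < delta\<close> unfolding eps_def by simp
  from ED have sch: "(E, D) \<in> schemes T Ob A N M"
    and sup: "(SUP p\<in>refs_of_dil T A rho N.
      ereal (\<Sum>Psi\<leftarrow>snd p. opnorm_diff T (tensS T (spow T A N) (fst p))
        (seqc T (parc T (seqc T D E) (idt T (fst p))) Psi) Psi)) < ereal eps"
    unfolding Eset_def eps_def by auto
  have gap: "mi_gap T E D C Ps As \<le> delta / 2" if cs: "(C, Ps, As) \<in> classical_setups T A rho N"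
    for C Ps As
  proof -
    have "ereal (\<Sum>Psi\<leftarrow>Ps. opnorm_diff T (tensS T (spow T A N) C)
        (seqc T (parc T (seqc T D E) (idt T C)) Psi) Psi) < ereal eps"
      by (rule le_less_trans[OF SUP_upper2[OF classical_setup_refinement[OF cs]] sup]) simp
    then have "mi_gap T E D C Ps As \<le> 13 * sqrt eps"
      by (intro mi_gap_le_sqrt_opnorm[OF sch cs]) (simp_all add: eps_def less_imp_le)
    with \<open>13 * sqrt eps \<le> delta / 2\<close> show ?thesis by linarith
  qed
  have "(SUP s\<in>classical_setups T A rho N. ereal (mi_gap T E D (fst s) (fst (snd s)) (snd (snd s))))
      \<le> ereal (delta / 2)"
  proof (rule SUP_least)
    fix s assume "s \<in> classical_setups T A rho N"
    then show "ereal (mi_gap T E D (fst s) (fst (snd s)) (snd (snd s))) \<le> ereal (delta / 2)"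
      using gap[of "fst s" "fst (snd s)" "snd (snd s)"] by simp
  qed
  also have "\<dots> < ereal delta" using \<open>0 < delta\<close> by simp
  finally show "(E, D) \<in> EsetC T Ob A rho N M delta"
    using sch unfolding EsetC_def by blast
qed

text \<open>A perfect encoding of \<open>A\<^sup>N\<close> into obits is a scheme with zero error.\<close>
lemma Eset_nonempty:
  assumes "digitalizable T Ob" "0 < eps"
  shows "\<exists>M. Eset T Ob A rho N M eps \<noteq> {}"
proof -
  obtain M E D where sch: "(E, D) \<in> schemes T Ob A N M" and DE: "seqc T D E = idt T (spow T A N)"
    using assms(1) unfolding digitalizable_def schemes_def by blast
  have "(\<Sum>Psi\<leftarrow>Ps. opnorm_diff T (tensS T (spow T A N) C)
      (seqc T (parc T (seqc T D E) (idt T C)) Psi) Psi) = 0"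
    if ref: "(C, Ps) \<in> refs_of_dil T A rho N" for C Ps
  proof -
    obtain U idx where U: "U \<in> tests T (unitS T) (tensS T (spow T A N) C)"
      and "set idx \<subseteq> {..<length U}" "Ps = map ((!) U) idx"
      using ref unfolding refs_of_dil_def is_refinement_def by blast
    have "seqc T (parc T (seqc T D E) (idt T C)) Psi = Psi" if "Psi \<in> set Ps" for Psi
    proof -
      have "Psi \<in> Tr T (unitS T) (tensS T (spow T A N) C)"
        using that \<open>set idx \<subseteq> {..<length U}\<close> \<open>Ps = map ((!) U) idx\<close>
        by (auto intro!: nth_in_Tr[OF opt U])
      from seqc_idt[OF opt this] show ?thesis using DE parc_idt_idt[OF opt] by simp
    qed
    moreover have "opnorm_diff T S Psi Psi = 0" for S Psi
    proof -
      have "Eff T S \<noteq> {}" using detE_Eff[OF opt sc] by blast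
      then show ?thesis unfolding opnorm_diff_def by (simp add: image_constant_conv)
    qed
    ultimately show ?thesis by (simp cong: map_cong)
  qed
  then have "(SUP p\<in>refs_of_dil T A rho N.
      ereal (\<Sum>Psi\<leftarrow>snd p. opnorm_diff T (tensS T (spow T A N) (fst p))
        (seqc T (parc T (seqc T D E) (idt T (fst p))) Psi) Psi)) \<le> 0"
    by (intro SUP_least) auto
  also have "\<dots> < ereal eps" using \<open>0 < eps\<close> by simp
  finally show ?thesis using sch unfolding Eset_def by blast
qed

end

theorem mainTheorem7:
  fixes T :: "('s, 't) opt" and Ob A :: 's and rho :: 't
  assumes "is_opt T"
    and "strongly_causal T"
    and "digitalizable T Ob"
    and "rho \<in> St1 T A"
  shows "infoC T Ob A rho \<le> info T Ob A rho"
proof -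
  have "info T Ob A rho = Lim (at_right 0) (\<lambda>e. rate (\<lambda>N M. Eset T Ob A rho N M e \<noteq> {}))"
    and "infoC T Ob A rho = Lim (at_right 0) (\<lambda>d. rate (\<lambda>N M. EsetC T Ob A rho N M d \<noteq> {}))"
    unfolding info_def infoC_def rate_def by simp_all
  moreover have "Lim (at_right 0) (\<lambda>d. rate (\<lambda>N M. EsetC T Ob A rho N M d \<noteq> {}))
      \<le> Lim (at_right 0) (\<lambda>e. rate (\<lambda>N M. Eset T Ob A rho N M e \<noteq> {}))"
  proof (rule Lim_rate_le)
    show "Eset T Ob A rho N M e' \<noteq> {}" if "e \<le> e'" "Eset T Ob A rho N M e \<noteq> {}" for e e' N M
      using that Eset_mono[of e e' T Ob A rho N M] by blast
    show "EsetC T Ob A rho N M d' \<noteq> {}" if "d \<le> d'" "EsetC T Ob A rho N M d \<noteq> {}" for d d' N M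
      using that EsetC_mono[of d d' T Ob A rho N M] by blast
    show "\<exists>M. Eset T Ob A rho N M e \<noteq> {}" if "0 < e" for e N
      by (rule Eset_nonempty[OF assms(1-3) that])
    show "\<exists>e>0. \<forall>N M. Eset T Ob A rho N M e \<noteq> {} \<longrightarrow> EsetC T Ob A rho N M d \<noteq> {}" if "0 < d" for d
      using that Eset_subset_EsetC[OF assms(1,2) that, of Ob A rho]
      by (intro exI[of _ "min 1 ((d / 26)\<^sup>2)"]) auto
  qed
  ultimately show ?thesis by simp
qed

end
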